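(* Let $\gamma\in C^{2}(\mathbb{R})$ be either an odd or an even function which is convex on $(0,\infty)$ and satisfies: (i) $\gamma(0)=\gamma'(0)=0$; (ii) $\frac{\gamma''(t)}{\gamma'(t)}$ is decreasing on $(0,\infty)$; (iii) there is a constant $C_1>0$ with $\frac{t\gamma''(t)}{\gamma'(t)}\geq C_1$ for all $t\in(0,\infty)$; (iv) $\gamma''$ is monotone on $(0,\infty)$. Then $\gamma$ satisfies the doubling condition (D): there exists $\lambda\in(1,\infty)$ such that $\gamma'(\lambda t)\geq 2\gamma'(t)$ for all $t\in(0,\infty)$; and $\gamma$ satisfies the infinitesimally doubling condition (ID): setting $h(t):=t\gamma'(t)-\gamma(t)$, there exists $\varepsilon_0\in(0,\infty)$ such that $h'(t)\geq \varepsilon_0\frac{h(t)}{t}$ for all $t\in(0,\infty)$. *)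

theory Defs
  imports "HOL-Analysis.Analysis"
begin

end

theory Submission
  imports Defs
begin

text \<open>Only convexity, (i) and (iii) are needed. Convexity makes \<open>\<gamma>'\<close> nondecreasing on
  \<open>(0,\<infinity>)\<close>, so \<open>\<gamma>' \<ge> \<gamma>' 0 = 0\<close> there, and (iii) forces \<open>\<gamma>' \<noteq> 0\<close>; hence \<open>\<gamma>' > 0\<close>.
  Then (iii) says that \<open>\<gamma>' t / t powr C\<^sub>1\<close> is nondecreasing, so \<open>\<gamma>' (\<lambda> t) \<ge> \<lambda> powr C\<^sub>1 * \<gamma>' t\<close>,
  which is (D) for \<open>\<lambda> = 2 powr (1/C\<^sub>1)\<close>. For (ID), \<open>h' t = t * \<gamma>'' t \<ge> C\<^sub>1 * \<gamma>' t \<ge> C\<^sub>1 * h t / t\<close>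
  because \<open>\<gamma> t \<ge> 0\<close>.\<close>

lemma convex_on_derivative_mono:
  fixes f :: "real \<Rightarrow> real"
  assumes "convex_on S f" "connected S" "x \<in> interior S" "y \<in> interior S" "x < y"
    and "(f has_real_derivative f'x) (at x within S)"
    and "(f has_real_derivative f'y) (at y within S)"
  shows "f'x \<le> f'y"
proof -
  have "f y - f x \<ge> f'x * (y - x)" and "f x - f y \<ge> f'y * (x - y)"
    using assms interior_subset by (blast intro: convex_on_imp_above_tangent)+
  then have "(f'y - f'x) * (y - x) \<ge> 0"
    by (simp add: algebra_simps)
  then show ?thesis
    using \<open>x < y\<close> by (simp add: zero_le_mult_iff)
qed

lemma mono_on_greaterThan_endpoint_le:
  fixes f :: "real \<Rightarrow> 'b::linorder_topology"
  assumes "mono_on {a<..} f" "continuous (at_right a) f" "a < t"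
  shows "f a \<le> f t"
proof (rule tendsto_upperbound)
  show "(f \<longlongrightarrow> f a) (at_right a)"
    using assms(2) by (simp add: continuous_within)
  show "\<forall>\<^sub>F s in at_right a. f s \<le> f t"
    using eventually_at_right_real[OF \<open>a < t\<close>]
    by eventually_elim (use assms(1) in \<open>auto intro: mono_onD\<close>)
qed simp

lemma convex_on_greaterThan_derivative_ge_endpoint:
  fixes f f' :: "real \<Rightarrow> real"
  assumes "convex_on {a<..} f"
    and "\<And>x. x > a \<Longrightarrow> (f has_real_derivative f' x) (at x)"
    and "continuous (at_right a) f'" "a < t"
  shows "f' a \<le> f' t"
proof -
  have "f' x \<le> f' y" if "a < x" "x < y" for x y
  proof (rule convex_on_derivative_mono[OF assms(1) connected_Ioi _ _ \<open>x < y\<close>])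
    show "x \<in> interior {a<..}" "y \<in> interior {a<..}"
      using that by (simp_all add: interior_open)
    show "(f has_real_derivative f' x) (at x within {a<..})"
      "(f has_real_derivative f' y) (at y within {a<..})"
      using that by (simp_all add: assms(2) has_field_derivative_at_within)
  qed
  then have "mono_on {a<..} f'"
    by (intro mono_onI) (metis greaterThan_iff order_le_less)
  then show ?thesis
    using assms(3,4) by (rule mono_on_greaterThan_endpoint_le)
qed

lemma powr_growth_if_elasticity_ge:
  fixes f f' :: "real \<Rightarrow> real"
  assumes deriv: "\<And>x. x > 0 \<Longrightarrow> (f has_real_derivative f' x) (at x)"
    and pos: "\<And>x. x > 0 \<Longrightarrow> f x > 0"
    and elasticity: "\<And>x. x > 0 \<Longrightarrow> C * f x \<le> x * f' x"
    and "0 < s" "s \<le> t"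
  shows "(t / s) powr C * f s \<le> f t"
proof -
  define g where "g x = ln (f x) - C * ln x" for x
  have "g s \<le> g t"
  proof (rule DERIV_nonneg_imp_nondecreasing[OF \<open>s \<le> t\<close>])
    fix x assume "s \<le> x" "x \<le> t"
    with \<open>0 < s\<close> have "x > 0" by linarith
    have "(g has_real_derivative (f' x / f x - C / x)) (at x)"
      unfolding g_def[abs_def]
      by (rule derivative_eq_intros refl deriv | use \<open>x > 0\<close> pos[of x] in simp)+
    moreover have "f' x / f x - C / x \<ge> 0"
      using elasticity[OF \<open>x > 0\<close>] pos[OF \<open>x > 0\<close>] \<open>x > 0\<close> by (simp add: field_simps)
    ultimately show "\<exists>y. (g has_real_derivative y) (at x) \<and> 0 \<le> y" by blast
  qed
  then have "ln ((t / s) powr C * f s) \<le> ln (f t)"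
    using \<open>0 < s\<close> \<open>s \<le> t\<close> pos[of s] by (simp add: g_def ln_mult ln_powr ln_div algebra_simps)
  then show ?thesis
    using \<open>0 < s\<close> \<open>s \<le> t\<close> pos[of s] pos[of t] by simp
qed

lemma infinitesimal_doubling_if_elasticity_ge:
  fixes \<gamma> \<gamma>' \<gamma>'' :: "real \<Rightarrow> real"
  assumes d1: "\<And>t. (\<gamma> has_real_derivative \<gamma>' t) (at t)"
    and d2: "\<And>t. (\<gamma>' has_real_derivative \<gamma>'' t) (at t)"
    and "\<gamma> 0 = 0" and \<gamma>'_nonneg: "\<And>t. t \<ge> 0 \<Longrightarrow> \<gamma>' t \<ge> 0"
    and "C \<ge> 0" and elasticity: "C * \<gamma>' t \<le> t * \<gamma>'' t" and "t > 0"
  shows "C * (t * \<gamma>' t - \<gamma> t) / t \<le> deriv (\<lambda>t. t * \<gamma>' t - \<gamma> t) t"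
proof -
  have "\<gamma> 0 \<le> \<gamma> t"
  proof (rule DERIV_nonneg_imp_nondecreasing[of 0 t \<gamma>])
    show "\<exists>y. (\<gamma> has_real_derivative y) (at x) \<and> y \<ge> 0" if "0 \<le> x" for x
      using d1 \<gamma>'_nonneg[OF that] by blast
  qed (use \<open>t > 0\<close> in simp)
  then have "C * (t * \<gamma>' t - \<gamma> t) / t \<le> C * \<gamma>' t"
    using \<open>t > 0\<close> \<open>\<gamma> 0 = 0\<close> \<open>C \<ge> 0\<close> by (simp add: divide_le_eq algebra_simps)
  also have "\<dots> \<le> t * \<gamma>'' t"
    by (rule elasticity)
  also have "\<dots> = deriv (\<lambda>t. t * \<gamma>' t - \<gamma> t) t"
    by (rule DERIV_imp_deriv[symmetric]) (rule derivative_eq_intros d1 d2 refl | simp)+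
  finally show ?thesis .
qed

theorem lemma3p1:
  fixes \<gamma> \<gamma>' \<gamma>'' :: "real \<Rightarrow> real"
  assumes d1: "\<And>t. (\<gamma> has_real_derivative \<gamma>' t) (at t)"
    and d2: "\<And>t. (\<gamma>' has_real_derivative \<gamma>'' t) (at t)"
    and c2: "continuous_on UNIV \<gamma>''"
    and parity: "(\<forall>x. \<gamma> (- x) = - \<gamma> x) \<or> (\<forall>x. \<gamma> (- x) = \<gamma> x)"
    and cvx: "convex_on {0<..} \<gamma>"
    and i: "\<gamma> 0 = 0" "\<gamma>' 0 = 0"
    and ii: "antimono_on {0<..} (\<lambda>t. \<gamma>'' t / \<gamma>' t)"
    and iii: "\<exists>C1>0. \<forall>t>0. t * \<gamma>'' t / \<gamma>' t \<ge> C1"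
    and iv: "mono_on {0<..} \<gamma>'' \<or> antimono_on {0<..} \<gamma>''"
  shows "(\<exists>lam>1. \<forall>t>0. \<gamma>' (lam * t) \<ge> 2 * \<gamma>' t)
       \<and> (let h = (\<lambda>t. t * \<gamma>' t - \<gamma> t) in
            \<exists>\<epsilon>0>0. \<forall>t>0. deriv h t \<ge> \<epsilon>0 * h t / t)"
proof -
  obtain C1 where "C1 > 0" and C1: "\<And>t. t > 0 \<Longrightarrow> t * \<gamma>'' t / \<gamma>' t \<ge> C1"
    using iii by blast
  have "continuous (at_right 0) \<gamma>'"
    using DERIV_isCont[OF d2] by (rule continuous_at_imp_continuous_within)
  then have "\<gamma>' 0 \<le> \<gamma>' t" if "t > 0" for t
    by (rule convex_on_greaterThan_derivative_ge_endpoint[OF cvx d1 _ that])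
  moreover have "\<gamma>' t \<noteq> 0" if "t > 0" for t
    using C1[OF that] \<open>C1 > 0\<close> by auto
  ultimately have \<gamma>'_pos: "\<gamma>' t > 0" if "t > 0" for t
    using that i(2) by (simp add: order_less_le)
  have elasticity: "C1 * \<gamma>' t \<le> t * \<gamma>'' t" if "t > 0" for t
    using C1[OF that] \<gamma>'_pos[OF that] by (simp add: pos_le_divide_eq)
  have D: "\<gamma>' (2 powr (1 / C1) * t) \<ge> 2 * \<gamma>' t" if "t > 0" for t
    using powr_growth_if_elasticity_ge[OF d2 \<gamma>'_pos elasticity that, of "2 powr (1 / C1) * t"]
      \<open>C1 > 0\<close> that by (simp add: powr_powr ge_one_powr_ge_zero)
  have "2 powr (1 / C1) > 1"
    using \<open>C1 > 0\<close> by (simp add: gr_one_powr)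
  have \<gamma>'_nonneg: "\<gamma>' t \<ge> 0" if "t \<ge> 0" for t
    using \<gamma>'_pos[of t] i(2) that by (auto simp: order_le_less)
  have ID: "C1 * (t * \<gamma>' t - \<gamma> t) / t \<le> deriv (\<lambda>t. t * \<gamma>' t - \<gamma> t) t" if "t > 0" for t
    using \<open>C1 > 0\<close> elasticity[OF that] that
    by (intro infinitesimal_doubling_if_elasticity_ge[OF d1 d2 i(1) \<gamma>'_nonneg]) auto
  show ?thesis
    unfolding Let_def using D \<open>2 powr (1 / C1) > 1\<close> ID \<open>C1 > 0\<close> by blast
qed

end
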